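(* For every pair of positive integers $n,d$ there exist an integer $N=N(n,d)$ and a pointed hypersurface $(p,Y)$ of degree $d$ in $\mathbb{P}^N$ such that every member of $\mathcal{U}_{n,d}$ is a parameterized linear section of $(p,Y)$. Furthermore, for every $(q,X)\in\mathcal{U}_{n,d}$ there exists a parameterized $n$-dimensional linear space $\Lambda\in\mathcal{G}_p(n,N)$ with $\phi_n(\Lambda)=(q,X)$ such that the induced map on tangent spaces $d\phi_n: T_\Lambda\mathcal{G}_p(n,N)\to T_{(q,X)}\mathcal{U}_{n,d}$ is surjective.
   Context: $\mathcal{U}_{n,d}$ is the universal hypersurface of degree $d$ in $\mathbb{P}^n$: the variety of pairs $(q,X)$ ("pointed hypersurfaces") where $X\subset\mathbb{P}^n$ is a hypersurface of degree $d$ and $q\in X$. A parameterized linear space of dimension $r$ in $\mathbb{P}^N$ is a linear embedding $f:\mathbb{P}^r\to\mathbb{P}^N$; $\mathcal{G}_p(r,N)$ denotes the space of parameterized $r$-dimensional linear spaces in $\mathbb{P}^N$ whose image contains $p$. For a pointed hypersurface $(p,Y)$ in $\mathbb{P}^N$ and $f\in\mathcal{G}_p(r,N)$ whose image is not contained in $Y$, the parameterized linear section of $(p,Y)$ by $f$ is $(f^{-1}(p),f^{-1}(Y))\in\mathcal{U}_{r,d}$. This defines the rational map $\phi_r:\mathcal{G}_p(r,N)\dashrightarrow\mathcal{U}_{r,d}$. *)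

theory Defs
  imports "HOL-Analysis.Analysis"
begin

text \<open>A vector of k^(m+1) is a function nat => complex vanishing at indices > m
  (homogeneous coordinates x_0..x_m).  A homogeneous form of degree d in
  x_0..x_m is given by its coefficient function on exponent vectors
  (monomials) of total degree d supported in {0..m}.  Points of P^m and
  hypersurfaces of degree d in P^m are nonzero vectors resp. nonzero forms,
  considered up to nonzero scalars.\<close>

definition vecs :: "nat \<Rightarrow> (nat \<Rightarrow> complex) set" where
  "vecs m = {v. \<forall>i>m. v i = 0}"

definition monomials :: "nat \<Rightarrow> nat \<Rightarrow> (nat \<Rightarrow> nat) set" where
  "monomials m d = {\<alpha>. (\<forall>i>m. \<alpha> i = 0) \<and> (\<Sum>i\<le>m. \<alpha> i) = d}"

definition forms :: "nat \<Rightarrow> nat \<Rightarrow> ((nat \<Rightarrow> nat) \<Rightarrow> complex) set" where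
  "forms m d = {F. \<forall>\<alpha>. \<alpha> \<notin> monomials m d \<longrightarrow> F \<alpha> = 0}"

definition feval :: "nat \<Rightarrow> nat \<Rightarrow> ((nat \<Rightarrow> nat) \<Rightarrow> complex) \<Rightarrow> (nat \<Rightarrow> complex) \<Rightarrow> complex" where
  "feval m d F x = (\<Sum>\<alpha>\<in>monomials m d. F \<alpha> * (\<Prod>i\<le>m. x i ^ \<alpha> i))"

definition proportional :: "('a \<Rightarrow> complex) \<Rightarrow> ('a \<Rightarrow> complex) \<Rightarrow> bool" where
  "proportional u v \<longleftrightarrow> (\<exists>c. c \<noteq> 0 \<and> u = (\<lambda>i. c * v i))"

definition pointed_hyp :: "nat \<Rightarrow> nat \<Rightarrow> (nat \<Rightarrow> complex) \<Rightarrow> ((nat \<Rightarrow> nat) \<Rightarrow> complex) \<Rightarrow> bool" where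
  "pointed_hyp m d q F \<longleftrightarrow>
     q \<in> vecs m \<and> q \<noteq> (\<lambda>_. 0) \<and> F \<in> forms m d \<and> F \<noteq> (\<lambda>_. 0) \<and> feval m d F q = 0"

definition matvec :: "nat \<Rightarrow> nat \<Rightarrow> (nat \<Rightarrow> nat \<Rightarrow> complex) \<Rightarrow> (nat \<Rightarrow> complex) \<Rightarrow> (nat \<Rightarrow> complex)" where
  "matvec N r A x = (\<lambda>i. if i \<le> N then (\<Sum>j\<le>r. A i j * x j) else 0)"

text \<open>A parameterized linear space P^r -> P^N (a linear embedding, given by an
  injective matrix A up to scalar) whose image contains the point p:
  membership in G_p(r,N).\<close>
definition in_Gp :: "nat \<Rightarrow> nat \<Rightarrow> (nat \<Rightarrow> complex) \<Rightarrow> (nat \<Rightarrow> nat \<Rightarrow> complex) \<Rightarrow> bool" where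
  "in_Gp N r p A \<longleftrightarrow>
     inj_on (matvec N r A) (vecs r) \<and> (\<exists>t\<in>vecs r. proportional (matvec N r A t) p)"

text \<open>(q, V(G)) is the parameterized linear section of (p, V(F)) by A, i.e.
  phi_n(A) = (q, X): the image of A is not contained in Y = V(F),
  A^{-1}(p) = q and the pullback F o A is proportional to G.\<close>
definition param_section ::
  "nat \<Rightarrow> nat \<Rightarrow> nat \<Rightarrow> (nat \<Rightarrow> complex) \<Rightarrow> ((nat \<Rightarrow> nat) \<Rightarrow> complex) \<Rightarrow>
   (nat \<Rightarrow> nat \<Rightarrow> complex) \<Rightarrow> (nat \<Rightarrow> complex) \<Rightarrow> ((nat \<Rightarrow> nat) \<Rightarrow> complex) \<Rightarrow> bool" where
  "param_section N r d p F A q G \<longleftrightarrow>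
     in_Gp N r p A \<and>
     (\<exists>x\<in>vecs r. feval N d F (matvec N r A x) \<noteq> 0) \<and>
     (\<exists>t\<in>vecs r. proportional (matvec N r A t) p \<and> proportional t q) \<and>
     (\<exists>c. c \<noteq> 0 \<and> (\<forall>x\<in>vecs r. feval N d F (matvec N r A x) = c * feval r d G x))"

definition dderiv :: "((nat \<Rightarrow> complex) \<Rightarrow> complex) \<Rightarrow> (nat \<Rightarrow> complex) \<Rightarrow> (nat \<Rightarrow> complex) \<Rightarrow> complex" where
  "dderiv f y v = deriv (\<lambda>s. f (\<lambda>j. y j + s * v j)) 0"

text \<open>Tangent space of the affine cone over U_{r,d}
  (= {(t,H). H(t) = 0}) at the point (t,H).\<close>
definition cone_tangent_U :: "nat \<Rightarrow> nat \<Rightarrow> (nat \<Rightarrow> complex) \<Rightarrow> ((nat \<Rightarrow> nat) \<Rightarrow> complex) \<Rightarrow>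
    ((nat \<Rightarrow> complex) \<times> ((nat \<Rightarrow> nat) \<Rightarrow> complex)) set" where
  "cone_tangent_U r d t H = {(tv, Hv). tv \<in> vecs r \<and> Hv \<in> forms r d \<and>
       feval r d Hv t + dderiv (feval r d H) t tv = 0}"

text \<open>Tangent space of the lifted space {(A,t). A t = p} at (A,t).\<close>
definition cone_tangent_G :: "nat \<Rightarrow> nat \<Rightarrow> (nat \<Rightarrow> nat \<Rightarrow> complex) \<Rightarrow> (nat \<Rightarrow> complex) \<Rightarrow>
    ((nat \<Rightarrow> nat \<Rightarrow> complex) \<times> (nat \<Rightarrow> complex)) set" where
  "cone_tangent_G N r A t = {(Av, tv). tv \<in> vecs r \<and>
       (\<forall>i. matvec N r Av t i + matvec N r A tv i = 0)}"

text \<open>Surjectivity of d phi_r : T_Lambda G_p(r,N) -> T_(q,X) U_{r,d}, computed on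
  the lift (A,t) with A t = p and the cone point (t,H), H = F o A:
  the image of the differential of the lifted map (A,t) |-> (t, F o A),
  together with the scaling directions (t,0), (0,H) (the kernel of the
  projection of cones), spans the tangent space of the cone over U_{r,d}.\<close>
definition dphi_surj ::
  "nat \<Rightarrow> nat \<Rightarrow> nat \<Rightarrow> ((nat \<Rightarrow> nat) \<Rightarrow> complex) \<Rightarrow> (nat \<Rightarrow> nat \<Rightarrow> complex) \<Rightarrow>
   (nat \<Rightarrow> complex) \<Rightarrow> ((nat \<Rightarrow> nat) \<Rightarrow> complex) \<Rightarrow> bool" where
  "dphi_surj N r d F A t H \<longleftrightarrow>
     (\<forall>(tv, Hv) \<in> cone_tangent_U r d t H.
        \<exists>(Av, tv') \<in> cone_tangent_G N r A t. \<exists>a b.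
          tv = (\<lambda>i. tv' i + a * t i) \<and>
          (\<forall>x\<in>vecs r. feval r d Hv x =
              dderiv (feval N d F) (matvec N r A x) (matvec N r Av x) + b * feval r d H x))"

end

theory Submission
  imports Defs "HOL-Computational_Algebra.Polynomial"
begin

(* Index the coordinates of P^N, N = n + #{monomials of degree d in x_0..x_n}, by
   z_0..z_n and one extra coordinate z_alpha per monomial x^alpha.  Choose for every alpha a
   pivot variable x_i with alpha_i > 0, and i <> 0 unless x^alpha = x_0^d, and let
     F(z) = SUM alpha. z_alpha * z^(alpha - e_i),   p = e_0,
   so F(p) = 0 because every term contains an extra coordinate.
   Given (q, V(G)), choose a linear change of coordinates M with M q = e_0 (after scaling q);
   then G' = G o M^-1 has x_0^d-coefficient G'(e_0) = G(q) = 0.  The embedding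
   x |-> (M x, (G'_alpha * (M x)_pivot(alpha))_alpha) pulls F back to G'(M x) = G(x), and it
   sends q to p: (M q)_i = 0 for i <> 0, and the only alpha with pivot 0 is x_0^d, whose
   coefficient in G' vanishes.
   For the differential, a tangent vector (tv, Hv) at (q, G) is realised by moving the
   extra rows by the coefficients of R = Hv + x_k * DG(x) tv, which again vanishes at q, and
   by a rank-one correction that moves the preimage of p along tv. *)

lemma sum_atMost_split:
  "(n::nat) \<le> N \<Longrightarrow> (\<Sum>k\<le>N. f k) = (\<Sum>k\<le>n. f k) + (\<Sum>k\<in>{n<..N}. f k)"
  by (subst ivl_disj_un_one(3)[of n N, symmetric]) (auto intro: sum.union_disjoint)

lemma prod_atMost_split:
  "(n::nat) \<le> N \<Longrightarrow> (\<Prod>k\<le>N. f k) = (\<Prod>k\<le>n. f k) * (\<Prod>k\<in>{n<..N}. f k)"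
  by (subst ivl_disj_un_one(3)[of n N, symmetric]) (auto intro: prod.union_disjoint)

lemma sum_delta_mult:
  fixes c :: "'a::semiring_0"
  shows "(j0::nat) \<le> n \<Longrightarrow> (\<Sum>j\<le>n. (if j = j0 then c else 0) * x j) = c * x j0"
  by (simp add: if_distrib[of "\<lambda>a. a * _"] cong: if_cong)

section \<open>Forms as polynomial functions\<close>

lemma finite_monomials: "finite (monomials m d)"
proof (rule inj_on_finite[where f = "\<lambda>\<alpha>. restrict \<alpha> {..m}"])
  show "inj_on (\<lambda>\<alpha>. restrict \<alpha> {..m}) (monomials m d)"
  proof (rule inj_onI, rule ext)
    fix \<alpha> \<beta> i assume "\<alpha> \<in> monomials m d" "\<beta> \<in> monomials m d" and "restrict \<alpha> {..m} = restrict \<beta> {..m}"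
    then show "\<alpha> i = \<beta> i"
      by (cases "i \<le> m") (auto simp: monomials_def dest: fun_cong[of _ _ i])
  qed
  have "\<alpha> i \<le> d" if "\<alpha> \<in> monomials m d" "i \<le> m" for \<alpha> i
    using that member_le_sum[of i "{..m}" \<alpha>] by (simp add: monomials_def)
  then show "(\<lambda>\<alpha>. restrict \<alpha> {..m}) ` monomials m d \<subseteq> PiE {..m} (\<lambda>_. {..d})"
    by (intro image_subsetI) (simp add: restrict_PiE_iff)
qed (simp add: finite_PiE)

definition form_fun :: "nat \<Rightarrow> nat \<Rightarrow> ((nat \<Rightarrow> complex) \<Rightarrow> complex) \<Rightarrow> bool" where
  "form_fun m d f \<longleftrightarrow> (\<exists>H\<in>forms m d. f = feval m d H)"

definition form_coeffs :: "nat \<Rightarrow> nat \<Rightarrow> ((nat \<Rightarrow> complex) \<Rightarrow> complex) \<Rightarrow> (nat \<Rightarrow> nat) \<Rightarrow> complex" where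
  "form_coeffs m d f = (SOME H. H \<in> forms m d \<and> f = feval m d H)"

lemma feval_form_coeffs:
  assumes "form_fun m d f"
  shows "feval m d (form_coeffs m d f) = f"
proof -
  have "\<exists>H. H \<in> forms m d \<and> f = feval m d H" using assms by (auto simp: form_fun_def)
  from someI_ex[OF this] show ?thesis by (simp add: form_coeffs_def)
qed

lemma form_fun_feval: "H \<in> forms m d \<Longrightarrow> form_fun m d (feval m d H)"
  by (auto simp: form_fun_def)

lemma form_fun_zero: "form_fun m d (\<lambda>x. 0)"
  unfolding form_fun_def
  by (rule bexI[of _ "\<lambda>_. 0"]) (auto simp: feval_def forms_def fun_eq_iff)

lemma form_fun_add:
  assumes "form_fun m d f" "form_fun m d g"
  shows "form_fun m d (\<lambda>x. f x + g x)"
proof -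
  from assms obtain F G where "F \<in> forms m d" "f = feval m d F" "G \<in> forms m d" "g = feval m d G"
    by (auto simp: form_fun_def)
  then show ?thesis unfolding form_fun_def
    by (intro bexI[of _ "\<lambda>\<alpha>. F \<alpha> + G \<alpha>"])
       (auto simp: feval_def forms_def fun_eq_iff distrib_right sum.distrib)
qed

lemma form_fun_cmult:
  assumes "form_fun m d f"
  shows "form_fun m d (\<lambda>x. c * f x)"
proof -
  from assms obtain F where "F \<in> forms m d" "f = feval m d F" by (auto simp: form_fun_def)
  then show ?thesis unfolding form_fun_def
    by (intro bexI[of _ "\<lambda>\<alpha>. c * F \<alpha>"])
       (auto simp: feval_def forms_def fun_eq_iff sum_distrib_left mult.assoc)
qed

lemma form_fun_sum:
  assumes "finite I" "\<And>i. i \<in> I \<Longrightarrow> form_fun m d (f i)"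
  shows "form_fun m d (\<lambda>x. \<Sum>i\<in>I. f i x)"
  using assms by (induction I rule: finite_induct) (simp_all add: form_fun_zero form_fun_add)

lemma form_fun_monomial:
  assumes "\<alpha> \<in> monomials m d"
  shows "form_fun m d (\<lambda>x. \<Prod>i\<le>m. x i ^ \<alpha> i)"
  unfolding form_fun_def
proof (rule bexI[of _ "\<lambda>\<beta>. if \<beta> = \<alpha> then 1 else 0"])
  show "(\<lambda>\<beta>. if \<beta> = \<alpha> then 1 else 0) \<in> forms m d" using assms by (auto simp: forms_def)
  have "feval m d (\<lambda>\<beta>. if \<beta> = \<alpha> then 1 else 0) x =
        (\<Sum>\<beta>\<in>monomials m d. if \<beta> = \<alpha> then \<Prod>i\<le>m. x i ^ \<beta> i else 0)" for x
    unfolding feval_def by (rule sum.cong) auto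
  then show "(\<lambda>x. \<Prod>i\<le>m. x i ^ \<alpha> i) = feval m d (\<lambda>\<beta>. if \<beta> = \<alpha> then 1 else 0)"
    using assms finite_monomials by (intro ext) (simp add: sum.delta')
qed

lemma form_fun_mult:
  assumes "form_fun m d1 f" "form_fun m d2 g"
  shows "form_fun m (d1 + d2) (\<lambda>x. f x * g x)"
proof -
  from assms obtain F G where FG: "f = feval m d1 F" "g = feval m d2 G" by (auto simp: form_fun_def)
  have "(\<lambda>x. f x * g x) = (\<lambda>x. \<Sum>\<alpha>\<in>monomials m d1. \<Sum>\<beta>\<in>monomials m d2.
                             F \<alpha> * G \<beta> * (\<Prod>i\<le>m. x i ^ (\<alpha> i + \<beta> i)))"
    by (simp add: FG feval_def fun_eq_iff sum_product power_add prod.distrib mult_ac)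
  moreover have "(\<lambda>i. \<alpha> i + \<beta> i) \<in> monomials m (d1 + d2)"
    if "\<alpha> \<in> monomials m d1" "\<beta> \<in> monomials m d2" for \<alpha> \<beta>
    using that by (auto simp: monomials_def sum.distrib)
  ultimately show ?thesis
    by (simp only:) (intro form_fun_sum form_fun_cmult form_fun_monomial finite_monomials)
qed

lemma form_fun_prod:
  assumes "finite I" "\<And>i. i \<in> I \<Longrightarrow> form_fun m (e i) (f i)"
  shows "form_fun m (\<Sum>i\<in>I. e i) (\<lambda>x. \<Prod>i\<in>I. f i x)"
  using assms
proof (induction I rule: finite_induct)
  case empty
  have "(\<lambda>_. 0) \<in> monomials m 0" by (simp add: monomials_def)
  from form_fun_monomial[OF this] show ?case by simp
qed (simp add: form_fun_mult)

lemma form_fun_power: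
  assumes "form_fun m d f"
  shows "form_fun m (k * d) (\<lambda>x. f x ^ k)"
  using form_fun_prod[of "{..<k}" m "\<lambda>_. d" "\<lambda>_. f"] assms by simp

lemma form_fun_coord:
  assumes "i \<le> m"
  shows "form_fun m 1 (\<lambda>x. x i)"
proof -
  have "(\<lambda>j. if j = i then 1 else 0) \<in> monomials m 1" using assms by (auto simp: monomials_def)
  from form_fun_monomial[OF this] show ?thesis
    using assms by (simp add: if_distrib prod.If_cases)
qed

lemma form_fun_comp_matvec:
  assumes "form_fun m d f"
  shows "form_fun m d (\<lambda>y. f (matvec m m P y))"
proof -
  from assms obtain H where "f = feval m d H" by (auto simp: form_fun_def)
  moreover have "form_fun m d (\<lambda>y. \<Prod>i\<le>m. (\<Sum>j\<le>m. P i j * y j) ^ \<alpha> i)" if "\<alpha> \<in> monomials m d" for \<alpha>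
  proof -
    have "form_fun m (\<Sum>i\<le>m. \<alpha> i * 1) (\<lambda>y. \<Prod>i\<le>m. (\<Sum>j\<le>m. P i j * y j) ^ \<alpha> i)"
      by (intro form_fun_prod form_fun_power form_fun_sum form_fun_cmult form_fun_coord) auto
    with that show ?thesis by (simp add: monomials_def)
  qed
  moreover have "(\<lambda>y. feval m d H (matvec m m P y)) =
      (\<lambda>y. \<Sum>\<alpha>\<in>monomials m d. H \<alpha> * (\<Prod>i\<le>m. (\<Sum>j\<le>m. P i j * y j) ^ \<alpha> i))"
    by (simp add: fun_eq_iff feval_def matvec_def)
  ultimately show ?thesis
    by (simp only:) (intro form_fun_sum form_fun_cmult finite_monomials)
qed

lemma feval_homogeneous:
  assumes "H \<in> forms m d"
  shows "feval m d H (\<lambda>i. c * x i) = c ^ d * feval m d H x"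
  unfolding feval_def sum_distrib_left
proof (rule sum.cong)
  fix \<alpha> assume "\<alpha> \<in> monomials m d"
  moreover have "(\<Prod>i\<le>m. (c * x i) ^ \<alpha> i) = c ^ (\<Sum>i\<le>m. \<alpha> i) * (\<Prod>i\<le>m. x i ^ \<alpha> i)"
    by (simp add: power_mult_distrib prod.distrib power_sum)
  ultimately show "H \<alpha> * (\<Prod>i\<le>m. (c * x i) ^ \<alpha> i) = c ^ d * (H \<alpha> * (\<Prod>i\<le>m. x i ^ \<alpha> i))"
    by (simp add: monomials_def)
qed simp

lemma feval_add_scaled: "feval m d (\<lambda>\<alpha>. H \<alpha> + s * H' \<alpha>) x = feval m d H x + s * feval m d H' x"
  by (simp add: feval_def sum.distrib sum_distrib_left algebra_simps)

lemma sum_base_power_inj: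
  fixes B :: nat
  assumes "\<forall>i\<le>n. a i < B" "\<forall>i\<le>n. b i < B" "(\<Sum>i\<le>n. a i * B ^ i) = (\<Sum>i\<le>n. b i * B ^ i)" "i \<le> n"
  shows "a i = b i"
  using assms
proof (induction n arbitrary: a b i)
  case (Suc n)
  have expand: "(\<Sum>i\<le>Suc n. c i * B ^ i) = c 0 + B * (\<Sum>i\<le>n. c (Suc i) * B ^ i)" for c :: "nat \<Rightarrow> nat"
    by (simp add: sum.atMost_Suc_shift sum_distrib_left mult_ac del: sum.atMost_Suc)
  have "a 0 < B" "b 0 < B" using Suc.prems by auto
  have eq: "a 0 + B * (\<Sum>i\<le>n. a (Suc i) * B ^ i) = b 0 + B * (\<Sum>i\<le>n. b (Suc i) * B ^ i)"
    using Suc.prems(3) by (simp only: expand)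
  then have "(a 0 + B * (\<Sum>i\<le>n. a (Suc i) * B ^ i)) mod B = (b 0 + B * (\<Sum>i\<le>n. b (Suc i) * B ^ i)) mod B"
    by (rule arg_cong)
  with \<open>a 0 < B\<close> \<open>b 0 < B\<close> have "a 0 = b 0" by simp
  from eq have "(a 0 + B * (\<Sum>i\<le>n. a (Suc i) * B ^ i)) div B = (b 0 + B * (\<Sum>i\<le>n. b (Suc i) * B ^ i)) div B"
    by (rule arg_cong)
  with \<open>a 0 < B\<close> \<open>b 0 < B\<close> have tail: "(\<Sum>i\<le>n. a (Suc i) * B ^ i) = (\<Sum>i\<le>n. b (Suc i) * B ^ i)"
    by simp
  show ?case
  proof (cases i)
    case (Suc j)
    then show ?thesis using Suc.IH[of "\<lambda>i. a (Suc i)" "\<lambda>i. b (Suc i)" j] Suc.prems tail by auto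
  qed (use \<open>a 0 = b 0\<close> in simp)
qed simp

text \<open>Kronecker substitution x_i = s^(B^i), B = d + 1, turns a form of degree d into a
  univariate polynomial without merging monomials.\<close>

lemma ex_feval_nonzero:
  assumes "G \<in> forms m d" "G \<noteq> (\<lambda>_. 0)"
  shows "\<exists>x\<in>vecs m. feval m d G x \<noteq> 0"
proof -
  define B where "B = Suc d"
  define e where "e \<alpha> = (\<Sum>i\<le>m. \<alpha> i * B ^ i)" for \<alpha> :: "nat \<Rightarrow> nat"
  have digit: "\<alpha> i < B" if "\<alpha> \<in> monomials m d" "i \<le> m" for \<alpha> i
    using that member_le_sum[of i "{..m}" \<alpha>] by (simp add: monomials_def B_def)
  have e_inj: "inj_on e (monomials m d)"
  proof (rule inj_onI, rule ext)
    fix \<alpha> \<beta> i assume "\<alpha> \<in> monomials m d" "\<beta> \<in> monomials m d" "e \<alpha> = e \<beta>"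
    then show "\<alpha> i = \<beta> i"
      using sum_base_power_inj[of m \<alpha> B \<beta> i] digit
      by (cases "i \<le> m") (auto simp: e_def monomials_def)
  qed
  obtain \<alpha>0 where "G \<alpha>0 \<noteq> 0" using assms(2) by auto
  with assms(1) have \<alpha>0: "\<alpha>0 \<in> monomials m d" by (auto simp: forms_def)
  define p where "p = (\<Sum>\<alpha>\<in>monomials m d. monom (G \<alpha>) (e \<alpha>))"
  have "coeff p (e \<alpha>0) = (\<Sum>\<alpha>\<in>monomials m d. if \<alpha> = \<alpha>0 then G \<alpha> else 0)"
    unfolding p_def coeff_sum coeff_monom
    by (rule sum.cong) (use e_inj \<alpha>0 in \<open>auto dest: inj_onD\<close>)
  also have "\<dots> = G \<alpha>0" using \<alpha>0 finite_monomials by (simp add: sum.delta')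
  finally have "p \<noteq> 0" using \<open>G \<alpha>0 \<noteq> 0\<close> by auto
  then obtain s where s: "poly p s \<noteq> 0" using poly_all_0_iff_0 by blast
  define x where "x i = (if i \<le> m then s ^ B ^ i else 0)" for i
  have "(\<Prod>i\<le>m. x i ^ \<alpha> i) = s ^ e \<alpha>" for \<alpha>
  proof -
    have "(\<Prod>i\<le>m. x i ^ \<alpha> i) = (\<Prod>i\<le>m. s ^ (\<alpha> i * B ^ i))"
      by (rule prod.cong) (simp_all add: x_def power_mult[symmetric] mult.commute)
    then show ?thesis by (simp add: e_def power_sum)
  qed
  then have "feval m d G x = poly p s"
    by (simp add: feval_def p_def poly_sum poly_monom)
  moreover have "x \<in> vecs m" by (simp add: x_def vecs_def)
  ultimately show ?thesis using s by metis
qed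

section \<open>Linear maps and directional derivatives\<close>

lemma matvec_add_scaled:
  "matvec N r A (\<lambda>j. x j + s * v j) = (\<lambda>i. matvec N r A x i + s * matvec N r A v i)"
  by (auto simp: matvec_def sum.distrib sum_distrib_left algebra_simps)

lemma matvec_matrix_add_scaled:
  "matvec N r (\<lambda>i j. A i j + s * B i j) x = (\<lambda>i. matvec N r A x i + s * matvec N r B x i)"
  by (auto simp: matvec_def sum.distrib sum_distrib_left algebra_simps)

lemma matvec_zero_mat: "matvec N r (\<lambda>_ _. 0) x = (\<lambda>_. 0)"
  by (simp add: matvec_def fun_eq_iff)

definition feval_deriv ::
  "nat \<Rightarrow> nat \<Rightarrow> ((nat \<Rightarrow> nat) \<Rightarrow> complex) \<Rightarrow> (nat \<Rightarrow> complex) \<Rightarrow> (nat \<Rightarrow> complex) \<Rightarrow> complex" where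
  "feval_deriv m d H z v = (\<Sum>\<alpha>\<in>monomials m d. H \<alpha> *
     (\<Sum>i\<le>m. of_nat (\<alpha> i) * z i ^ (\<alpha> i - 1) * v i * (\<Prod>j\<in>{..m} - {i}. z j ^ \<alpha> j)))"

lemma dderiv_feval: "dderiv (feval m d H) z v = feval_deriv m d H z v"
proof -
  have "((\<lambda>s. z i + s * v i) has_field_derivative v i) (at 0)" for i
    by (auto intro!: derivative_eq_intros)
  from DERIV_power[OF this] have
    "((\<lambda>s. (z i + s * v i) ^ k) has_field_derivative of_nat k * z i ^ (k - 1) * v i) (at 0)" for i k
    by (simp add: mult_ac)
  then have "((\<lambda>s. \<Prod>i\<le>m. (z i + s * v i) ^ \<alpha> i) has_field_derivative
      (\<Sum>i\<le>m. of_nat (\<alpha> i) * z i ^ (\<alpha> i - 1) * v i * (\<Prod>j\<in>{..m} - {i}. z j ^ \<alpha> j))) (at 0)" for \<alpha>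
    using has_field_derivative_prod[of "{..m}" "\<lambda>i s. (z i + s * v i) ^ \<alpha> i"
        "\<lambda>i. of_nat (\<alpha> i) * z i ^ (\<alpha> i - 1) * v i" 0]
    by simp
  then have "((\<lambda>s. feval m d H (\<lambda>j. z j + s * v j)) has_field_derivative feval_deriv m d H z v) (at 0)"
    unfolding feval_def feval_deriv_def by (intro DERIV_sum DERIV_cmult) auto
  then show ?thesis unfolding dderiv_def by (rule DERIV_imp_deriv)
qed

lemma dderiv_feval_linear:
  "dderiv (feval m d H) z (\<lambda>i. a * v i + w i) = a * dderiv (feval m d H) z v + dderiv (feval m d H) z w"
  unfolding dderiv_feval feval_deriv_def
  by (simp add: sum_distrib_left sum.distrib[symmetric] algebra_simps)

lemma form_fun_dderiv_feval:
  assumes "H \<in> forms m d"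
  shows "form_fun m (d - 1) (\<lambda>z. dderiv (feval m d H) z w)"
  unfolding dderiv_feval feval_deriv_def
proof (intro form_fun_sum finite_monomials finite_atMost form_fun_cmult)
  fix \<alpha> i assume \<alpha>: "\<alpha> \<in> monomials m d" and i: "i \<in> {..m}"
  show "form_fun m (d - 1) (\<lambda>z. of_nat (\<alpha> i) * z i ^ (\<alpha> i - 1) * w i * (\<Prod>j\<in>{..m} - {i}. z j ^ \<alpha> j))"
  proof (cases "\<alpha> i = 0")
    case True
    then show ?thesis by (simp add: form_fun_zero)
  next
    case False
    define \<beta> where "\<beta> = \<alpha>(i := \<alpha> i - 1)"
    have "(\<Sum>j\<le>m. \<beta> j) = \<beta> i + (\<Sum>j\<in>{..m} - {i}. \<alpha> j)" and "(\<Sum>j\<le>m. \<alpha> j) = \<alpha> i + (\<Sum>j\<in>{..m} - {i}. \<alpha> j)"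
      using i by (simp_all add: sum.remove \<beta>_def)
    with \<alpha> False have "\<beta> \<in> monomials m (d - 1)" by (auto simp: monomials_def \<beta>_def)
    moreover have "(\<Prod>j\<le>m. z j ^ \<beta> j) = z i ^ (\<alpha> i - 1) * (\<Prod>j\<in>{..m} - {i}. z j ^ \<alpha> j)" for z :: "nat \<Rightarrow> complex"
      using i by (simp add: prod.remove \<beta>_def)
    ultimately have "form_fun m (d - 1) (\<lambda>z. (of_nat (\<alpha> i) * w i) * (z i ^ (\<alpha> i - 1) * (\<Prod>j\<in>{..m} - {i}. z j ^ \<alpha> j)))"
      using form_fun_monomial form_fun_cmult by fastforce
    then show ?thesis by (simp add: mult_ac)
  qed
qed

lemma dderiv_affine_line:
  assumes "\<And>s. f (\<lambda>j. y j + s * v j) = a + s * b"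
  shows "dderiv f y v = b"
  unfolding dderiv_def assms by (rule DERIV_imp_deriv) (auto intro!: derivative_eq_intros)

lemma dderiv_matvec:
  "dderiv f (matvec N r A x) (matvec N r A v) = dderiv (\<lambda>y. f (matvec N r A y)) x v"
  unfolding dderiv_def matvec_add_scaled ..

lemma dderiv_cong_vecs:
  assumes "\<And>y. y \<in> vecs r \<Longrightarrow> f y = g y" and "x \<in> vecs r" "v \<in> vecs r"
  shows "dderiv f x v = dderiv g x v"
proof -
  have "(\<lambda>j. x j + s * v j) \<in> vecs r" for s using assms(2,3) by (simp add: vecs_def)
  then show ?thesis unfolding dderiv_def using assms(1) by simp
qed

section \<open>The universal pointed hypersurface\<close>

definition e0 :: "nat \<Rightarrow> complex" where
  "e0 = (\<lambda>i. if i = 0 then 1 else 0)"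

definition mono_e0 :: "nat \<Rightarrow> nat \<Rightarrow> nat" where
  "mono_e0 d = (\<lambda>i. if i = 0 then d else 0)"

lemma mono_e0_in_monomials: "mono_e0 d \<in> monomials m d"
  by (auto simp: mono_e0_def monomials_def)

lemma monomial_eq_mono_e0:
  assumes "\<alpha> \<in> monomials m d" and "\<forall>i\<in>{1..m}. \<alpha> i = 0"
  shows "\<alpha> = mono_e0 d"
proof
  fix i
  have "(\<Sum>j\<le>m. \<alpha> j) = \<alpha> 0 + (\<Sum>j\<in>{1..m}. \<alpha> j)"
    by (simp add: atMost_atLeast0 sum.atLeast_Suc_atMost)
  with assms have "\<alpha> 0 = d" by (simp add: monomials_def)
  with assms show "\<alpha> i = mono_e0 d i"
    by (cases "i \<le> m") (auto simp: mono_e0_def monomials_def)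
qed

lemma feval_e0: "feval m d H e0 = H (mono_e0 d)"
proof -
  have "(\<Prod>i\<le>m. e0 i ^ \<alpha> i) = (if \<alpha> = mono_e0 d then 1 else 0)" if \<alpha>: "\<alpha> \<in> monomials m d" for \<alpha>
  proof (cases "\<alpha> = mono_e0 d")
    case True
    then show ?thesis by (simp add: mono_e0_def e0_def prod.neutral)
  next
    case False
    with monomial_eq_mono_e0[OF \<alpha>] obtain i where "i \<in> {1..m}" "\<alpha> i \<noteq> 0" by blast
    then have "e0 i ^ \<alpha> i = 0" by (simp add: e0_def)
    with \<open>i \<in> {1..m}\<close> have "(\<Prod>i\<le>m. e0 i ^ \<alpha> i) = 0" by (intro prod_zero) auto
    with False show ?thesis by simp
  qed
  then have "feval m d H e0 = (\<Sum>\<alpha>\<in>monomials m d. if \<alpha> = mono_e0 d then H \<alpha> else 0)"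
    unfolding feval_def by (intro sum.cong) simp_all
  also have "\<dots> = H (mono_e0 d)" using mono_e0_in_monomials finite_monomials by (simp add: sum.delta')
  finally show ?thesis .
qed

definition pivot :: "nat \<Rightarrow> (nat \<Rightarrow> nat) \<Rightarrow> nat" where
  "pivot n \<alpha> = (if \<exists>i\<in>{1..n}. 0 < \<alpha> i then SOME i. i \<in> {1..n} \<and> 0 < \<alpha> i else 0)"

definition lower_pivot :: "nat \<Rightarrow> (nat \<Rightarrow> nat) \<Rightarrow> nat \<Rightarrow> nat" where
  "lower_pivot n \<alpha> = \<alpha>(pivot n \<alpha> := \<alpha> (pivot n \<alpha>) - 1)"

lemma pivot_in_range:
  assumes "\<exists>i\<in>{1..n}. 0 < \<alpha> i"
  shows "pivot n \<alpha> \<in> {1..n}" and "0 < \<alpha> (pivot n \<alpha>)"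
proof -
  from assms have "\<exists>i. i \<in> {1..n} \<and> 0 < \<alpha> i" by blast
  from someI_ex[OF this] assms show "pivot n \<alpha> \<in> {1..n}" "0 < \<alpha> (pivot n \<alpha>)"
    unfolding pivot_def by simp_all
qed

lemma pivot_le: "pivot n \<alpha> \<le> n"
  using pivot_in_range(1)[of n \<alpha>] by (cases "\<exists>i\<in>{1..n}. 0 < \<alpha> i") (auto simp: pivot_def)

lemma pivot_eq_0_iff:
  assumes "\<alpha> \<in> monomials n d"
  shows "pivot n \<alpha> = 0 \<longleftrightarrow> \<alpha> = mono_e0 d"
  using pivot_in_range(1)[of n \<alpha>] monomial_eq_mono_e0[OF assms]
  by (cases "\<exists>i\<in>{1..n}. 0 < \<alpha> i") (auto simp: pivot_def mono_e0_def)

lemma pivot_pos: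
  assumes "\<alpha> \<in> monomials n d" and "1 \<le> d"
  shows "0 < \<alpha> (pivot n \<alpha>)"
proof (cases "\<exists>i\<in>{1..n}. 0 < \<alpha> i")
  case False
  with assms show ?thesis
    using pivot_eq_0_iff[OF assms(1)] monomial_eq_mono_e0[OF assms(1)] by (auto simp: mono_e0_def)
qed (rule pivot_in_range(2))

lemma sum_lower_pivot:
  assumes "\<alpha> \<in> monomials n d" and "1 \<le> d"
  shows "(\<Sum>k\<le>n. lower_pivot n \<alpha> k) = d - 1"
proof -
  let ?i = "pivot n \<alpha>"
  have i: "?i \<in> {..n}" "0 < \<alpha> ?i" using pivot_le pivot_pos[OF assms] by auto
  have "(\<Sum>k\<le>n. lower_pivot n \<alpha> k) = (\<alpha> ?i - 1) + (\<Sum>k\<in>{..n} - {?i}. \<alpha> k)"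
    using i(1) by (simp add: sum.remove lower_pivot_def)
  moreover have "d = \<alpha> ?i + (\<Sum>k\<in>{..n} - {?i}. \<alpha> k)"
    using i(1) assms(1) by (simp add: sum.remove monomials_def)
  ultimately show ?thesis using i(2) by simp
qed

lemma prod_lower_pivot:
  assumes "\<alpha> \<in> monomials n d" and "1 \<le> d"
  shows "y (pivot n \<alpha>) * (\<Prod>k\<le>n. y k ^ lower_pivot n \<alpha> k) = (\<Prod>k\<le>n. (y k :: complex) ^ \<alpha> k)"
proof -
  let ?i = "pivot n \<alpha>"
  have i: "?i \<in> {..n}" "0 < \<alpha> ?i" using pivot_le pivot_pos[OF assms] by auto
  have "(\<Prod>k\<le>n. y k ^ lower_pivot n \<alpha> k) = y ?i ^ (\<alpha> ?i - 1) * (\<Prod>k\<in>{..n} - {?i}. y k ^ \<alpha> k)"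
    using i(1) by (simp add: prod.remove lower_pivot_def)
  moreover have "(\<Prod>k\<le>n. y k ^ \<alpha> k) = y ?i ^ \<alpha> ?i * (\<Prod>k\<in>{..n} - {?i}. y k ^ \<alpha> k)"
    using i(1) by (simp add: prod.remove)
  ultimately show ?thesis using i(2) by (simp add: power_eq_if)
qed

definition univ_dim :: "nat \<Rightarrow> nat \<Rightarrow> nat" where
  "univ_dim n d = n + card (monomials n d)"

definition extra_coord :: "nat \<Rightarrow> nat \<Rightarrow> (nat \<Rightarrow> nat) \<Rightarrow> nat" where
  "extra_coord n d = (SOME h. bij_betw h (monomials n d) {n<..univ_dim n d})"

definition extra_monomial :: "nat \<Rightarrow> nat \<Rightarrow> nat \<Rightarrow> nat \<Rightarrow> nat" where
  "extra_monomial n d = inv_into (monomials n d) (extra_coord n d)"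

lemma bij_betw_extra_coord: "bij_betw (extra_coord n d) (monomials n d) {n<..univ_dim n d}"
proof -
  have "\<exists>h. bij_betw h (monomials n d) {n<..univ_dim n d}"
    by (rule finite_same_card_bij) (simp_all add: finite_monomials univ_dim_def)
  then show ?thesis unfolding extra_coord_def by (rule someI_ex)
qed

lemma extra_coord_bounds:
  assumes "\<alpha> \<in> monomials n d"
  shows "n < extra_coord n d \<alpha>" and "extra_coord n d \<alpha> \<le> univ_dim n d"
  using bij_betwE[OF bij_betw_extra_coord] assms by auto

lemma extra_monomial_extra_coord:
  "\<alpha> \<in> monomials n d \<Longrightarrow> extra_monomial n d (extra_coord n d \<alpha>) = \<alpha>"
  unfolding extra_monomial_def by (rule bij_betw_inv_into_left[OF bij_betw_extra_coord])

lemma univ_coord_cases: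
  obtains "i \<le> n" | \<alpha> where "\<alpha> \<in> monomials n d" "i = extra_coord n d \<alpha>" | "univ_dim n d < i"
proof -
  have "i \<in> extra_coord n d ` monomials n d" if "n < i" "i \<le> univ_dim n d"
    using bij_betw_imp_surj_on[OF bij_betw_extra_coord] that by auto
  then show ?thesis using that by force
qed

text \<open>univ_form encodes F(z) = (SUM alpha. z_(extra_coord alpha) * z^(lower_pivot alpha)):
  univ_monomial alpha is the exponent vector of the alpha-th term.\<close>

definition univ_monomial :: "nat \<Rightarrow> nat \<Rightarrow> (nat \<Rightarrow> nat) \<Rightarrow> nat \<Rightarrow> nat" where
  "univ_monomial n d \<alpha> k =
     (if k \<le> n then lower_pivot n \<alpha> k else if k = extra_coord n d \<alpha> then 1 else 0)"

definition univ_form :: "nat \<Rightarrow> nat \<Rightarrow> (nat \<Rightarrow> nat) \<Rightarrow> complex" where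
  "univ_form n d \<beta> = (if \<beta> \<in> univ_monomial n d ` monomials n d then 1 else 0)"

lemma univ_monomial_in_monomials:
  assumes "\<alpha> \<in> monomials n d" and "1 \<le> d"
  shows "univ_monomial n d \<alpha> \<in> monomials (univ_dim n d) d"
proof -
  note bounds = extra_coord_bounds[OF assms(1)]
  have "(\<Sum>k\<in>{n<..univ_dim n d}. univ_monomial n d \<alpha> k) =
        (\<Sum>k\<in>{n<..univ_dim n d}. if k = extra_coord n d \<alpha> then 1 else 0)"
    by (rule sum.cong) (auto simp: univ_monomial_def)
  also have "\<dots> = 1" using bounds by simp
  moreover have "(\<Sum>k\<le>n. univ_monomial n d \<alpha> k) = d - 1"
    using sum_lower_pivot[OF assms] by (simp add: univ_monomial_def)
  ultimately have "(\<Sum>k\<le>univ_dim n d. univ_monomial n d \<alpha> k) = d"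
    using sum_atMost_split[of n "univ_dim n d" "univ_monomial n d \<alpha>"] assms(2) by (simp add: univ_dim_def)
  moreover have "univ_monomial n d \<alpha> k = 0" if "univ_dim n d < k" for k
    using bounds that by (simp add: univ_monomial_def)
  ultimately show ?thesis by (simp add: monomials_def)
qed

lemma inj_on_univ_monomial: "inj_on (univ_monomial n d) (monomials n d)"
proof (rule inj_onI)
  fix \<alpha> \<beta> assume \<alpha>: "\<alpha> \<in> monomials n d" and \<beta>: "\<beta> \<in> monomials n d"
    and eq: "univ_monomial n d \<alpha> = univ_monomial n d \<beta>"
  from eq have "univ_monomial n d \<beta> (extra_coord n d \<alpha>) = univ_monomial n d \<alpha> (extra_coord n d \<alpha>)"
    by simp
  also have "\<dots> = 1" using extra_coord_bounds(1)[OF \<alpha>] by (simp add: univ_monomial_def)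
  finally have "extra_coord n d \<alpha> = extra_coord n d \<beta>"
    using extra_coord_bounds(1)[OF \<alpha>] by (simp add: univ_monomial_def split: if_splits)
  with \<alpha> \<beta> show "\<alpha> = \<beta>" by (metis extra_monomial_extra_coord)
qed

lemma feval_univ_form:
  assumes "1 \<le> d"
  shows "feval (univ_dim n d) d (univ_form n d) z =
         (\<Sum>\<alpha>\<in>monomials n d. z (extra_coord n d \<alpha>) * (\<Prod>k\<le>n. z k ^ lower_pivot n \<alpha> k))"
proof -
  have "univ_monomial n d ` monomials n d \<subseteq> monomials (univ_dim n d) d"
    using univ_monomial_in_monomials[OF _ assms] by auto
  then have "feval (univ_dim n d) d (univ_form n d) z =
             (\<Sum>\<beta>\<in>univ_monomial n d ` monomials n d. \<Prod>k\<le>univ_dim n d. z k ^ \<beta> k)"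
    unfolding feval_def univ_form_def
    by (intro sum.mono_neutral_cong_right) (auto simp: finite_monomials)
  also have "\<dots> = (\<Sum>\<alpha>\<in>monomials n d. \<Prod>k\<le>univ_dim n d. z k ^ univ_monomial n d \<alpha> k)"
    by (simp add: sum.reindex[OF inj_on_univ_monomial])
  also have "\<dots> = (\<Sum>\<alpha>\<in>monomials n d. z (extra_coord n d \<alpha>) * (\<Prod>k\<le>n. z k ^ lower_pivot n \<alpha> k))"
  proof (rule sum.cong)
    fix \<alpha> assume "\<alpha> \<in> monomials n d"
    note bounds = extra_coord_bounds[OF this]
    have "(\<Prod>k\<in>{n<..univ_dim n d}. z k ^ univ_monomial n d \<alpha> k) =
          (\<Prod>k\<in>{n<..univ_dim n d}. if k = extra_coord n d \<alpha> then z k else 1)"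
      by (rule prod.cong) (auto simp: univ_monomial_def)
    also have "\<dots> = z (extra_coord n d \<alpha>)" using bounds by simp
    moreover have "(\<Prod>k\<le>n. z k ^ univ_monomial n d \<alpha> k) = (\<Prod>k\<le>n. z k ^ lower_pivot n \<alpha> k)"
      by (simp add: univ_monomial_def)
    ultimately show "(\<Prod>k\<le>univ_dim n d. z k ^ univ_monomial n d \<alpha> k) =
                     z (extra_coord n d \<alpha>) * (\<Prod>k\<le>n. z k ^ lower_pivot n \<alpha> k)"
      using prod_atMost_split[of n "univ_dim n d" "\<lambda>k. z k ^ univ_monomial n d \<alpha> k"]
      by (simp add: univ_dim_def)
  qed simp
  finally show ?thesis .
qed

lemma pointed_hyp_univ_form:
  assumes "1 \<le> d"
  shows "pointed_hyp (univ_dim n d) d e0 (univ_form n d)"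
  unfolding pointed_hyp_def
proof (intro conjI)
  show "univ_form n d \<in> forms (univ_dim n d) d"
    using univ_monomial_in_monomials[OF _ assms] by (auto simp: univ_form_def forms_def)
  have "univ_form n d (univ_monomial n d (mono_e0 d)) = 1"
    using mono_e0_in_monomials by (simp add: univ_form_def)
  then show "univ_form n d \<noteq> (\<lambda>_. 0)" by force
  have "e0 (extra_coord n d \<alpha>) = 0" if "\<alpha> \<in> monomials n d" for \<alpha>
    using extra_coord_bounds(1)[OF that] by (simp add: e0_def)
  then show "feval (univ_dim n d) d (univ_form n d) e0 = 0"
    by (simp add: feval_univ_form[OF assms])
qed (auto simp: e0_def vecs_def fun_eq_iff)

section \<open>Linear sections of the universal hypersurface\<close>

text \<open>Rows beyond univ_dim n d of lift_mat are junk; matvec (univ_dim n d) ignores them.\<close>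

definition lift_mat :: "nat \<Rightarrow> nat \<Rightarrow> (nat \<Rightarrow> nat \<Rightarrow> complex) \<Rightarrow> (nat \<Rightarrow> nat \<Rightarrow> complex) \<Rightarrow>
    ((nat \<Rightarrow> nat) \<Rightarrow> complex) \<Rightarrow> nat \<Rightarrow> nat \<Rightarrow> complex" where
  "lift_mat n d Y M c i j =
     (if i \<le> n then Y i j else c (extra_monomial n d i) * M (pivot n (extra_monomial n d i)) j)"

lemma matvec_lift_mat_top:
  "i \<le> n \<Longrightarrow> matvec (univ_dim n d) n (lift_mat n d Y M c) x i = matvec n n Y x i"
  by (simp add: matvec_def lift_mat_def univ_dim_def)

lemma matvec_lift_mat_extra:
  assumes "\<alpha> \<in> monomials n d"
  shows "matvec (univ_dim n d) n (lift_mat n d Y M c) x (extra_coord n d \<alpha>) = c \<alpha> * matvec n n M x (pivot n \<alpha>)"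
  using extra_coord_bounds[OF assms] pivot_le[of n \<alpha>]
  by (simp add: matvec_def lift_mat_def extra_monomial_extra_coord[OF assms] sum_distrib_left mult.assoc)

lemma feval_univ_form_lift_mat:
  assumes "1 \<le> d"
  shows "feval (univ_dim n d) d (univ_form n d) (matvec (univ_dim n d) n (lift_mat n d M M c) x) =
         feval n d c (matvec n n M x)"
proof -
  let ?z = "matvec (univ_dim n d) n (lift_mat n d M M c) x" and ?y = "matvec n n M x"
  have summand: "?z (extra_coord n d \<alpha>) * (\<Prod>k\<le>n. ?z k ^ lower_pivot n \<alpha> k) = c \<alpha> * (\<Prod>k\<le>n. ?y k ^ \<alpha> k)"
    if \<alpha>: "\<alpha> \<in> monomials n d" for \<alpha>
    using prod_lower_pivot[OF \<alpha> assms, of ?y]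
    by (simp add: matvec_lift_mat_extra[OF \<alpha>] matvec_lift_mat_top mult.assoc)
  have "feval (univ_dim n d) d (univ_form n d) ?z =
        (\<Sum>\<alpha>\<in>monomials n d. ?z (extra_coord n d \<alpha>) * (\<Prod>k\<le>n. ?z k ^ lower_pivot n \<alpha> k))"
    by (rule feval_univ_form[OF assms])
  also have "\<dots> = feval n d c ?y"
    unfolding feval_def by (rule sum.cong) (simp_all add: summand)
  finally show ?thesis .
qed

lemma dderiv_univ_form_lift_mat:
  assumes "1 \<le> d"
  shows "dderiv (feval (univ_dim n d) d (univ_form n d)) (matvec (univ_dim n d) n (lift_mat n d M M c) x)
           (matvec (univ_dim n d) n (lift_mat n d (\<lambda>_ _. 0) M c') x) = feval n d c' (matvec n n M x)"
proof (rule dderiv_affine_line)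
  fix s
  have eq: "(\<lambda>i j. lift_mat n d M M c i j + s * lift_mat n d (\<lambda>_ _. 0) M c' i j) =
            lift_mat n d M M (\<lambda>\<alpha>. c \<alpha> + s * c' \<alpha>)"
    by (simp add: fun_eq_iff lift_mat_def algebra_simps)
  have "(\<lambda>i. matvec (univ_dim n d) n (lift_mat n d M M c) x i + s * matvec (univ_dim n d) n (lift_mat n d (\<lambda>_ _. 0) M c') x i)
        = matvec (univ_dim n d) n (lift_mat n d M M (\<lambda>\<alpha>. c \<alpha> + s * c' \<alpha>)) x"
    unfolding eq[symmetric] by (rule matvec_matrix_add_scaled[symmetric])
  then show "feval (univ_dim n d) d (univ_form n d)
               (\<lambda>i. matvec (univ_dim n d) n (lift_mat n d M M c) x i + s * matvec (univ_dim n d) n (lift_mat n d (\<lambda>_ _. 0) M c') x i)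
             = feval n d c (matvec n n M x) + s * feval n d c' (matvec n n M x)"
    by (simp add: feval_univ_form_lift_mat[OF assms] feval_add_scaled)
qed

lemma matvec_lift_mat_at_point:
  assumes "matvec n n M t = e0" and "c (mono_e0 d) = 0"
  shows "matvec (univ_dim n d) n (lift_mat n d Y M c) t = (\<lambda>i. if i \<le> n then matvec n n Y t i else 0)"
proof
  fix i
  show "matvec (univ_dim n d) n (lift_mat n d Y M c) t i = (if i \<le> n then matvec n n Y t i else 0)"
  proof (cases rule: univ_coord_cases[where i = i and n = n and d = d])
    case (2 \<alpha>)
    have "c \<alpha> * e0 (pivot n \<alpha>) = 0"
      using pivot_eq_0_iff[OF 2(1)] assms(2) by (auto simp: e0_def)
    with 2 extra_coord_bounds(1)[OF 2(1)] show ?thesis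
      by (simp add: matvec_lift_mat_extra assms(1))
  next
    case 1
    then show ?thesis by (simp add: matvec_lift_mat_top)
  next
    case 3
    then show ?thesis by (simp add: matvec_def univ_dim_def)
  qed
qed

lemma inj_on_matvec_lift_mat:
  assumes "\<And>x. x \<in> vecs n \<Longrightarrow> matvec n n P (matvec n n M x) = x"
  shows "inj_on (matvec (univ_dim n d) n (lift_mat n d M M c)) (vecs n)"
proof (rule inj_onI)
  fix x y assume x: "x \<in> vecs n" and y: "y \<in> vecs n"
    and eq: "matvec (univ_dim n d) n (lift_mat n d M M c) x = matvec (univ_dim n d) n (lift_mat n d M M c) y"
  have "matvec n n M x = matvec n n M y"
  proof
    fix i show "matvec n n M x i = matvec n n M y i"
    proof (cases "i \<le> n")
      case True
      then show ?thesis using fun_cong[OF eq, of i] by (simp add: matvec_lift_mat_top)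
    qed (simp add: matvec_def)
  qed
  then show "x = y" using assms[OF x] assms[OF y] by metis
qed

section \<open>Moving a point to e_0\<close>

definition normalize_mat :: "nat \<Rightarrow> (nat \<Rightarrow> complex) \<Rightarrow> nat \<Rightarrow> nat \<Rightarrow> complex" where
  "normalize_mat k t i j =
     (if i = 0 then (if j = k then 1 else 0)
      else (if j = Transposition.transpose 0 k i then 1 else 0) -
           (if j = k then t (Transposition.transpose 0 k i) else 0))"

definition denormalize_mat :: "nat \<Rightarrow> (nat \<Rightarrow> complex) \<Rightarrow> nat \<Rightarrow> nat \<Rightarrow> complex" where
  "denormalize_mat k t i j =
     (if j = 0 then t i else 0) + (if i \<noteq> k \<and> j = Transposition.transpose 0 k i then 1 else 0)"

lemma transpose_le: "k \<le> (n::nat) \<Longrightarrow> i \<le> n \<Longrightarrow> Transposition.transpose 0 k i \<le> n"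
  by (simp add: Transposition.transpose_def)

lemma matvec_normalize_mat:
  assumes "k \<le> n" "i \<le> n"
  shows "matvec n n (normalize_mat k t) x i =
         (if i = 0 then x k else x (Transposition.transpose 0 k i) - t (Transposition.transpose 0 k i) * x k)"
  using assms transpose_le[OF assms]
  by (simp add: matvec_def normalize_mat_def left_diff_distrib sum_subtractf sum_delta_mult)

lemma matvec_denormalize_mat:
  assumes "k \<le> n" "i \<le> n"
  shows "matvec n n (denormalize_mat k t) y i = t i * y 0 + (if i \<noteq> k then y (Transposition.transpose 0 k i) else 0)"
  using assms transpose_le[OF assms]
  by (simp add: matvec_def denormalize_mat_def distrib_right sum.distrib sum_delta_mult)

lemma denormalize_normalize:
  assumes "k \<le> n" "t k = 1" "x \<in> vecs n"
  shows "matvec n n (denormalize_mat k t) (matvec n n (normalize_mat k t) x) = x"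
proof
  fix i
  show "matvec n n (denormalize_mat k t) (matvec n n (normalize_mat k t) x) i = x i"
  proof (cases "i \<le> n")
    case True
    then show ?thesis
      using assms transpose_le[OF assms(1) True]
      by (cases "i = k") (auto simp: matvec_denormalize_mat matvec_normalize_mat transpose_eq_iff algebra_simps)
  next
    case False
    with assms(3) show ?thesis by (simp add: matvec_def vecs_def)
  qed
qed

lemma normalize_mat_point:
  assumes "k \<le> n" "t k = 1"
  shows "matvec n n (normalize_mat k t) t = e0"
proof
  fix i
  show "matvec n n (normalize_mat k t) t i = e0 i"
  proof (cases "i \<le> n")
    case True
    with assms show ?thesis by (simp add: matvec_normalize_mat e0_def)
  qed (simp add: matvec_def e0_def)
qed

lemma denormalize_mat_e0:
  assumes "k \<le> n" "t \<in> vecs n"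
  shows "matvec n n (denormalize_mat k t) e0 = t"
proof
  fix i
  show "matvec n n (denormalize_mat k t) e0 i = t i"
  proof (cases "i \<le> n")
    case True
    with assms(1) show ?thesis by (simp add: matvec_denormalize_mat e0_def transpose_eq_iff)
  qed (use assms(2) in \<open>simp add: matvec_def vecs_def\<close>)
qed

section \<open>Sections through a pointed hypersurface\<close>

lemma proportional_refl: "proportional u u"
  unfolding proportional_def by (intro exI[of _ 1]) simp

locale pointed_form =
  fixes n d :: nat and q :: "nat \<Rightarrow> complex" and G :: "(nat \<Rightarrow> nat) \<Rightarrow> complex"
  assumes d_pos: "1 \<le> d" and pointed: "pointed_hyp n d q G"
begin

definition k :: nat where
  "k = (SOME k. q k \<noteq> 0)"

definition t :: "nat \<Rightarrow> complex" where
  "t i = q i / q k"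

lemma q_k: "q k \<noteq> 0"
proof -
  have "\<exists>k. q k \<noteq> 0" using pointed by (auto simp: pointed_hyp_def)
  then show ?thesis unfolding k_def by (rule someI_ex)
qed

lemma k_le: "k \<le> n"
proof (rule ccontr)
  assume "\<not> k \<le> n"
  with pointed have "q k = 0" by (simp add: pointed_hyp_def vecs_def)
  with q_k show False by contradiction
qed

lemma t_k: "t k = 1"
  using q_k by (simp add: t_def)

lemma t_vec: "t \<in> vecs n"
  using pointed by (simp add: t_def pointed_hyp_def vecs_def)

lemma G_form: "G \<in> forms n d"
  using pointed by (simp add: pointed_hyp_def)

lemma t_eq_scaled_q: "t = (\<lambda>i. inverse (q k) * q i)"
  by (simp add: fun_eq_iff t_def divide_inverse mult.commute)

lemma feval_G_t: "feval n d G t = 0"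
  using pointed by (simp add: t_eq_scaled_q feval_homogeneous[OF G_form] pointed_hyp_def)

lemma proportional_t_q: "proportional t q"
  unfolding proportional_def t_eq_scaled_q using q_k by (intro exI[of _ "inverse (q k)"]) simp

abbreviation M :: "nat \<Rightarrow> nat \<Rightarrow> complex" where
  "M \<equiv> normalize_mat k t"

abbreviation P :: "nat \<Rightarrow> nat \<Rightarrow> complex" where
  "P \<equiv> denormalize_mat k t"

lemma P_M: "x \<in> vecs n \<Longrightarrow> matvec n n P (matvec n n M x) = x"
  by (rule denormalize_normalize[where k = k and t = t, OF k_le t_k])

lemma M_t: "matvec n n M t = e0"
  by (rule normalize_mat_point[where k = k and t = t, OF k_le t_k])

definition pullback :: "((nat \<Rightarrow> complex) \<Rightarrow> complex) \<Rightarrow> (nat \<Rightarrow> nat) \<Rightarrow> complex" where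
  "pullback f = form_coeffs n d (\<lambda>y. f (matvec n n P y))"

lemma feval_pullback_eq:
  "form_fun n d f \<Longrightarrow> feval n d (pullback f) = (\<lambda>y. f (matvec n n P y))"
  unfolding pullback_def by (intro feval_form_coeffs form_fun_comp_matvec)

lemma pullback_mono_e0: "form_fun n d f \<Longrightarrow> pullback f (mono_e0 d) = f t"
  using feval_e0[of n d "pullback f"] denormalize_mat_e0[OF k_le t_vec] by (simp add: feval_pullback_eq)

lemma feval_pullback: "form_fun n d f \<Longrightarrow> x \<in> vecs n \<Longrightarrow> feval n d (pullback f) (matvec n n M x) = f x"
  using P_M by (simp add: feval_pullback_eq)

abbreviation N :: nat where
  "N \<equiv> univ_dim n d"

abbreviation F :: "(nat \<Rightarrow> nat) \<Rightarrow> complex" where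
  "F \<equiv> univ_form n d"

definition A :: "nat \<Rightarrow> nat \<Rightarrow> complex" where
  "A = lift_mat n d M M (pullback (feval n d G))"

lemma matvec_lift_mat_t:
  "c (mono_e0 d) = 0 \<Longrightarrow> matvec N n (lift_mat n d Y M c) t = (\<lambda>i. if i \<le> n then matvec n n Y t i else 0)"
  by (rule matvec_lift_mat_at_point[OF M_t])

lemma matvec_A_t: "matvec N n A t = e0"
proof -
  have "pullback (feval n d G) (mono_e0 d) = 0"
    using pullback_mono_e0[OF form_fun_feval[OF G_form]] feval_G_t by simp
  then show ?thesis by (auto simp: A_def matvec_lift_mat_t M_t e0_def)
qed

lemma feval_F_A: "x \<in> vecs n \<Longrightarrow> feval N d F (matvec N n A x) = feval n d G x"
  by (simp add: A_def feval_univ_form_lift_mat[OF d_pos] feval_pullback form_fun_feval[OF G_form])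

lemma param_section_A: "param_section N n d e0 F A q G"
  unfolding param_section_def in_Gp_def
proof (intro conjI)
  show "inj_on (matvec N n A) (vecs n)"
    unfolding A_def by (rule inj_on_matvec_lift_mat[OF P_M])
  show "\<exists>t'\<in>vecs n. proportional (matvec N n A t') e0"
    using t_vec by (intro bexI[of _ t]) (simp_all add: matvec_A_t proportional_refl)
  show "\<exists>t'\<in>vecs n. proportional (matvec N n A t') e0 \<and> proportional t' q"
    using t_vec proportional_t_q by (intro bexI[of _ t]) (simp_all add: matvec_A_t proportional_refl)
  obtain x0 where "x0 \<in> vecs n" "feval n d G x0 \<noteq> 0"
    using ex_feval_nonzero[OF G_form] pointed by (auto simp: pointed_hyp_def)
  then show "\<exists>x\<in>vecs n. feval N d F (matvec N n A x) \<noteq> 0"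
    using feval_F_A by auto
  show "\<exists>c. c \<noteq> 0 \<and> (\<forall>x\<in>vecs n. feval N d F (matvec N n A x) = c * feval n d G x)"
    using feval_F_A by (intro exI[of _ 1]) simp
qed

lemma tangent_lift:
  assumes "(tv, Hv) \<in> cone_tangent_U n d t G"
  obtains Av where "(Av, tv) \<in> cone_tangent_G N n A t"
    and "\<And>x. x \<in> vecs n \<Longrightarrow> feval n d Hv x = dderiv (feval N d F) (matvec N n A x) (matvec N n Av x)"
proof -
  from assms have tv: "tv \<in> vecs n" and Hv: "Hv \<in> forms n d"
    and tangent: "feval n d Hv t + dderiv (feval n d G) t tv = 0"
    by (auto simp: cone_tangent_U_def)
  \<comment> \<open>Av will move the preimage t of p along tv, which changes the derivative of F o A by
    -x_k * DG(x) tv; the extra rows are moved by the coefficients of R, which compensates this.\<close>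
  define R where "R x = feval n d Hv x + x k * dderiv (feval n d G) x tv" for x
  have "form_fun n (1 + (d - 1)) (\<lambda>x. x k * dderiv (feval n d G) x tv)"
    by (intro form_fun_mult form_fun_coord k_le form_fun_dderiv_feval G_form)
  then have R_form: "form_fun n d R"
    unfolding R_def using d_pos by (intro form_fun_add form_fun_feval Hv) simp
  define U where "U = lift_mat n d (\<lambda>_ _. 0) M (pullback R)"
  have "pullback R (mono_e0 d) = 0"
    using pullback_mono_e0[OF R_form] tangent t_k by (simp add: R_def)
  then have U_t: "matvec N n U t = (\<lambda>_. 0)"
    by (simp add: U_def matvec_lift_mat_t matvec_zero_mat fun_eq_iff)
  have U_x: "dderiv (feval N d F) (matvec N n A x) (matvec N n U x) = R x" if "x \<in> vecs n" for x
    using dderiv_univ_form_lift_mat[OF d_pos] feval_pullback[OF R_form that] by (simp add: A_def U_def)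
  define Av where "Av i j = (if j = k then - matvec N n A tv i else 0) + U i j" for i j
  have Av_x: "matvec N n Av x = (\<lambda>i. (- x k) * matvec N n A tv i + matvec N n U x i)" for x
  proof
    fix i
    show "matvec N n Av x i = (- x k) * matvec N n A tv i + matvec N n U x i"
    proof (cases "i \<le> N")
      case True
      then have "matvec N n Av x i = (- matvec N n A tv i) * x k + matvec N n U x i"
        using k_le by (simp add: Av_def matvec_def distrib_right sum.distrib sum_delta_mult)
      then show ?thesis by (simp add: mult.commute)
    qed (simp add: matvec_def)
  qed
  show ?thesis
  proof (rule that)
    show "(Av, tv) \<in> cone_tangent_G N n A t"
      using tv U_t t_k by (simp add: cone_tangent_G_def Av_x)
    fix x assume x: "x \<in> vecs n"
    have DG: "dderiv (feval N d F) (matvec N n A x) (matvec N n A tv) = dderiv (feval n d G) x tv"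
      unfolding dderiv_matvec using feval_F_A x tv by (rule dderiv_cong_vecs)
    show "feval n d Hv x = dderiv (feval N d F) (matvec N n A x) (matvec N n Av x)"
      unfolding Av_x dderiv_feval_linear U_x[OF x] DG by (simp add: R_def)
  qed
qed

lemma dphi_surj_A: "dphi_surj N n d F A t G"
  unfolding dphi_surj_def
proof clarify
  fix tv Hv assume "(tv, Hv) \<in> cone_tangent_U n d t G"
  then show "\<exists>(Av, tv')\<in>cone_tangent_G N n A t. \<exists>a b. tv = (\<lambda>i. tv' i + a * t i) \<and>
      (\<forall>x\<in>vecs n. feval n d Hv x = dderiv (feval N d F) (matvec N n A x) (matvec N n Av x) + b * feval n d G x)"
  proof (rule tangent_lift)
    fix Av assume "(Av, tv) \<in> cone_tangent_G N n A t"
      and "\<And>x. x \<in> vecs n \<Longrightarrow> feval n d Hv x = dderiv (feval N d F) (matvec N n A x) (matvec N n Av x)"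
    then show ?thesis by (intro bexI[of _ "(Av, tv)"]) (auto intro!: exI[where x = 0])
  qed
qed

end

theorem lemma4p2:
  fixes n d :: nat
  assumes "n \<ge> 1" and "d \<ge> 1"
  shows "\<exists>N p F. pointed_hyp N d p F \<and>
           (\<forall>q G. pointed_hyp n d q G \<longrightarrow>
              (\<exists>A. param_section N n d p F A q G \<and>
                   (\<exists>t H. t \<in> vecs n \<and> matvec N n A t = p \<and> H \<in> forms n d \<and>
                          (\<forall>x\<in>vecs n. feval n d H x = feval N d F (matvec N n A x)) \<and>
                          dphi_surj N n d F A t H)))"
proof (intro exI[of _ "univ_dim n d"] exI[of _ e0] exI[of _ "univ_form n d"] conjI allI impI)
  show "pointed_hyp (univ_dim n d) d e0 (univ_form n d)"
    using \<open>d \<ge> 1\<close> by (rule pointed_hyp_univ_form)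
  fix q G assume "pointed_hyp n d q G"
  with \<open>d \<ge> 1\<close> interpret pointed_form n d q G by unfold_locales
  show "\<exists>A. param_section (univ_dim n d) n d e0 (univ_form n d) A q G \<and>
          (\<exists>t H. t \<in> vecs n \<and> matvec (univ_dim n d) n A t = e0 \<and> H \<in> forms n d \<and>
             (\<forall>x\<in>vecs n. feval n d H x = feval (univ_dim n d) d (univ_form n d) (matvec (univ_dim n d) n A x)) \<and>
             dphi_surj (univ_dim n d) n d (univ_form n d) A t H)"
    using param_section_A t_vec matvec_A_t G_form feval_F_A dphi_surj_A
    by (intro exI[of _ A] exI[of _ t] exI[of _ G] conjI ballI) simp_all
qed

end
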